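(* Let $\pi:A^\infty\to LA^\infty$ be defined by $\pi(\varepsilon)=*$ and $\pi(aw)=(a,w)$ for $a\in A$, $w\in A^\infty$. Then $\pi$ is measurable and $(A^\infty,\pi)$ is a final $L$-coalgebra in $\mathbf{Meas}$: for every measurable $\gamma:X\to LX$ there is a unique measurable $\varphi:X\to A^\infty$ with $\pi\circ\varphi=L\varphi\circ\gamma$.
   Context: $A$ is a finite alphabet, $A^*$ finite words (empty word $\varepsilon$), $A^\omega$ infinite words, $A^\infty=A^*\cup A^\omega$, $wS=\{wv\mid v\in S\}$. $\Sigma_{A^\infty}$ is the $\sigma$-algebra generated by $S_\infty=\{\emptyset\}\cup\{\{w\}\mid w\in A^*\}\cup\{wA^\infty\mid w\in A^*\}$. Work in $\mathbf{Meas}$; $1=\{*\}$; the functor $L$ is $LX=A\times X+1$ with $\sigma$-algebra $(\mathcal P(A)\otimes\Sigma_X)\oplus\mathcal P(1)$ (the sum $\sigma$-algebra on a disjoint union consists of the disjoint unions of measurable pieces), and $Lf=\mathrm{id}_A\times f+\mathrm{id}_1$. *)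

theory Defs
  imports "HOL-Analysis.Analysis"
begin

text \<open>Finite and infinite words A^\<infinity> over the alphabet 'a (possibly terminating lazy lists).\<close>
codatatype 'a word = Eps | Cons 'a "'a word"

primrec prepend :: "'a list \<Rightarrow> 'a word \<Rightarrow> 'a word" where
  "prepend [] v = v"
| "prepend (a # w) v = Cons a (prepend w v)"

definition fin :: "'a list \<Rightarrow> 'a word" where
  "fin w = prepend w Eps"

definition S_inf :: "'a word set set" where
  "S_inf = {{}} \<union> {{fin w} | w. True} \<union> {prepend w ` UNIV | w. True}"

definition Ainf :: "'a word measure" where
  "Ainf = sigma UNIV S_inf"

definition Lobj :: "'b measure \<Rightarrow> ('a \<times> 'b + unit) measure" where
  "Lobj X = measure_of ((UNIV \<times> space X) <+> UNIV)
     {Inl ` S \<union> Inr ` T | S T. S \<in> sets (count_space (UNIV :: 'a set) \<Otimes>\<^sub>M X) \<and> T \<subseteq> UNIV}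
     (\<lambda>_. 0)"

definition Lmap :: "('b \<Rightarrow> 'c) \<Rightarrow> ('a \<times> 'b + unit) \<Rightarrow> ('a \<times> 'c + unit)" where
  "Lmap f = map_sum (map_prod id f) id"

definition pi_map :: "'a word \<Rightarrow> 'a \<times> 'a word + unit" where
  "pi_map w = (case w of Eps \<Rightarrow> Inr () | Cons a v \<Rightarrow> Inl (a, v))"

end

theory Submission
  imports Defs
begin

text \<open>The unique coalgebra morphism is the corecursive unfolding of \<gamma>: read off a letter as long as
  \<gamma> answers \<open>Inl\<close>, stop at \<open>Inr\<close>. Uniqueness is coinduction on words. For measurability it suffices
  to check the generators \<open>{w}\<close> and \<open>wA\<^sup>\<infinity>\<close>; both are of the form \<open>prepend w ` B\<close>, and the preimage of
  \<open>Cons a ` B\<close> under the unfolding is the \<gamma>-preimage of \<open>Inl ` ({a} \<times> \<dots>)\<close>, so induction on \<open>w\<close>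
  reduces everything to the measurability of \<gamma>. Measurability of \<pi> uses finiteness of A to make
  the head of a word measurable.\<close>

lemma space_Ainf [simp]: "space Ainf = UNIV"
  unfolding Ainf_def by (simp add: S_inf_def)

lemma sets_Ainf_fin: "{fin w} \<in> sets Ainf"
  unfolding Ainf_def by (auto simp: S_inf_def)

lemma sets_Ainf_prepend: "range (prepend w) \<in> sets Ainf"
  unfolding Ainf_def by (auto simp: S_inf_def)

lemma fin_simps [simp]: "fin [] = Eps" "fin (a # w) = Cons a (fin w)"
  by (simp_all add: fin_def)

lemma sets_Ainf_Eps [simp]: "{Eps} \<in> sets Ainf"
  using sets_Ainf_fin[of "[]"] by simp

lemma sets_Ainf_range_Cons [simp]: "range (Cons a) \<in> sets Ainf"
  using sets_Ainf_prepend[of "[a]"] by simp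

lemma measurable_AinfI:
  assumes "\<And>w. f -` {fin w} \<inter> space M \<in> sets M"
    and "\<And>w. f -` range (prepend w) \<inter> space M \<in> sets M"
  shows "f \<in> M \<rightarrow>\<^sub>M Ainf"
  unfolding Ainf_def by (rule measurable_measure_of) (use assms in \<open>auto simp: S_inf_def\<close>)

lemma Lobj_generators_Pow:
  "{Inl ` S \<union> Inr ` T | S T. S \<in> sets (count_space UNIV \<Otimes>\<^sub>M X) \<and> T \<subseteq> UNIV}
     \<subseteq> Pow ((UNIV \<times> space X) <+> UNIV)"
  using sets.sets_into_space by (fastforce simp: space_pair_measure)

lemma space_Lobj: "space (Lobj X) = (UNIV \<times> space X) <+> UNIV"
  unfolding Lobj_def by (rule space_measure_of[OF Lobj_generators_Pow])

lemma sets_Lobj_Inl_Un_Inr: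
  assumes "S \<in> sets (count_space UNIV \<Otimes>\<^sub>M X)"
  shows "Inl ` S \<union> Inr ` T \<in> sets (Lobj X)"
  unfolding Lobj_def sets_measure_of[OF Lobj_generators_Pow]
  using assms by (intro sigma_sets.Basic) blast

lemma measurable_LobjI:
  fixes f :: "'m \<Rightarrow> 'a \<times> 'b + unit" and X :: "'b measure"
  assumes "f \<in> space M \<rightarrow> (UNIV \<times> space X) <+> UNIV"
    and "\<And>S. S \<in> sets (count_space UNIV \<Otimes>\<^sub>M X) \<Longrightarrow> f -` Inl ` S \<inter> space M \<in> sets M"
    and "f -` {Inr ()} \<inter> space M \<in> sets M"
  shows "f \<in> M \<rightarrow>\<^sub>M Lobj X"
  unfolding Lobj_def
proof (rule measurable_measure_of[OF Lobj_generators_Pow assms(1)])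
  fix G assume "G \<in> {Inl ` S \<union> Inr ` T | S T.
    S \<in> sets (count_space (UNIV :: 'a set) \<Otimes>\<^sub>M X) \<and> T \<subseteq> (UNIV :: unit set)}"
  then obtain S T where G: "G = Inl ` S \<union> Inr ` T" and S: "S \<in> sets (count_space UNIV \<Otimes>\<^sub>M X)"
    by blast
  have "T = {} \<or> T = {()}" by auto
  then have "f -` G \<inter> space M
      = (f -` Inl ` S \<inter> space M) \<union> (if T = {} then {} else f -` {Inr ()} \<inter> space M)"
    by (auto simp: G)
  then show "f -` G \<inter> space M \<in> sets M"
    using assms(2)[OF S] assms(3) by auto
qed

lemma measurable_Lobj_vimage_Inl:
  assumes "f \<in> M \<rightarrow>\<^sub>M Lobj X" and "S \<in> sets (count_space UNIV \<Otimes>\<^sub>M X)"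
  shows "f -` Inl ` S \<inter> space M \<in> sets M"
  using measurable_sets[OF assms(1) sets_Lobj_Inl_Un_Inr[OF assms(2), of "{}"]] by simp

lemma measurable_Lobj_vimage_Inr:
  assumes "f \<in> M \<rightarrow>\<^sub>M Lobj X"
  shows "f -` {Inr ()} \<inter> space M \<in> sets M"
  using measurable_sets[OF assms sets_Lobj_Inl_Un_Inr[of "{}" X "{()}"]] by simp

lemma measurable_un_Cons1: "(un_Cons1 :: 'a::finite word \<Rightarrow> 'a) \<in> Ainf \<rightarrow>\<^sub>M count_space UNIV"
proof -
  have "un_Cons1 -` {a} = range (Cons a) \<union> (if un_Cons1 Eps = a then {Eps} else {})" for a :: 'a
  proof (intro set_eqI)
    show "w \<in> un_Cons1 -` {a} \<longleftrightarrow> w \<in> range (Cons a) \<union> (if un_Cons1 Eps = a then {Eps} else {})"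
      for w by (cases w) auto
  qed
  then show ?thesis
    by (simp add: measurable_count_space_eq2[OF finite] sets.insert_in_sets)
qed

lemma vimage_un_Cons2:
  "un_Cons2 -` B = (if un_Cons2 Eps \<in> B then {Eps} else {}) \<union> (\<Union>a. Cons a ` B)"
proof (intro set_eqI)
  show "w \<in> un_Cons2 -` B \<longleftrightarrow> w \<in> (if un_Cons2 Eps \<in> B then {Eps} else {}) \<union> (\<Union>a. Cons a ` B)"
    for w by (cases w) auto
qed

lemma measurable_un_Cons2: "(un_Cons2 :: 'a::finite word \<Rightarrow> 'a word) \<in> Ainf \<rightarrow>\<^sub>M Ainf"
proof (rule measurable_AinfI)
  fix w :: "'a list"
  have "(\<Union>a. Cons a ` {fin w}) \<in> sets Ainf"
    using sets_Ainf_fin[of "_ # w"] by (intro sets.finite_UN) auto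
  then show "un_Cons2 -` {fin w} \<inter> space Ainf \<in> sets Ainf"
    by (simp add: vimage_un_Cons2 sets.insert_in_sets)
  have "(\<Union>a. range (prepend (a # w))) \<in> sets Ainf"
    by (intro sets.finite_UN sets_Ainf_prepend) auto
  moreover have "(\<Union>a. range (prepend (a # w))) = (\<Union>a. Cons a ` range (prepend w))"
    by auto
  ultimately have "(\<Union>a. Cons a ` range (prepend w)) \<in> sets Ainf"
    by (simp only:)
  then show "un_Cons2 -` range (prepend w) \<inter> space Ainf \<in> sets Ainf"
    by (simp add: vimage_un_Cons2 sets.insert_in_sets)
qed

lemma measurable_pi_map: "pi_map \<in> (Ainf :: 'a::finite word measure) \<rightarrow>\<^sub>M Lobj Ainf"
proof (rule measurable_LobjI)
  show "pi_map \<in> space Ainf \<rightarrow> (UNIV \<times> space Ainf) <+> UNIV"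
    by (auto simp: pi_map_def split: word.splits)
  have "pi_map -` {Inr ()} = {Eps :: 'a word}"
    by (auto simp: pi_map_def split: word.splits)
  then show "pi_map -` {Inr ()} \<inter> space Ainf \<in> sets (Ainf :: 'a word measure)"
    by simp
  fix S :: "('a \<times> 'a word) set" assume S: "S \<in> sets (count_space UNIV \<Otimes>\<^sub>M Ainf)"
  have "(\<lambda>w. (un_Cons1 w, un_Cons2 w)) -` S \<in> sets Ainf"
    using measurable_sets[OF measurable_Pair[OF measurable_un_Cons1 measurable_un_Cons2] S] by simp
  moreover have "pi_map -` Inl ` S = (\<lambda>w. (un_Cons1 w, un_Cons2 w)) -` S - {Eps}"
    by (auto simp: pi_map_def split: word.splits)
  ultimately show "pi_map -` Inl ` S \<inter> space Ainf \<in> sets Ainf"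
    by auto
qed

lemma pi_map_eq_Lmap_Inl_iff: "pi_map w = Lmap \<psi> (Inl (a, y)) \<longleftrightarrow> w = Cons a (\<psi> y)"
  by (auto simp: pi_map_def Lmap_def split: word.splits)

lemma pi_map_eq_Lmap_Inr_iff: "pi_map w = Lmap \<psi> (Inr u) \<longleftrightarrow> w = Eps"
  by (auto simp: pi_map_def Lmap_def split: word.splits)

primcorec word_unfold :: "('b \<Rightarrow> 'a \<times> 'b + unit) \<Rightarrow> 'b \<Rightarrow> 'a word" where
  "word_unfold g x = (case g x of Inr _ \<Rightarrow> Eps | Inl p \<Rightarrow> Cons (fst p) (word_unfold g (snd p)))"

lemma word_unfold_Inl: "g x = Inl (a, y) \<Longrightarrow> word_unfold g x = Cons a (word_unfold g y)"
  by (subst word_unfold.code) simp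

lemma word_unfold_Inr: "g x = Inr u \<Longrightarrow> word_unfold g x = Eps"
  by (subst word_unfold.code) simp

lemma pi_map_word_unfold: "pi_map (word_unfold g x) = Lmap (word_unfold g) (g x)"
  by (cases "g x")
    (auto simp: word_unfold_Inl word_unfold_Inr pi_map_eq_Lmap_Inl_iff pi_map_eq_Lmap_Inr_iff)

lemma vimage_word_unfold_Cons:
  assumes "\<gamma> \<in> space X \<rightarrow> (UNIV \<times> space X) <+> UNIV"
  shows "word_unfold \<gamma> -` Cons a ` B \<inter> space X
    = \<gamma> -` Inl ` ({a} \<times> (word_unfold \<gamma> -` B \<inter> space X)) \<inter> space X"
proof (intro set_eqI iffI)
  fix x assume x: "x \<in> word_unfold \<gamma> -` Cons a ` B \<inter> space X"
  show "x \<in> \<gamma> -` Inl ` ({a} \<times> (word_unfold \<gamma> -` B \<inter> space X)) \<inter> space X"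
  proof (cases "\<gamma> x")
    case (Inl p)
    moreover obtain b y where "p = (b, y)" by (cases p)
    moreover have "y \<in> space X"
      using assms x Inl \<open>p = (b, y)\<close> by force
    ultimately show ?thesis
      using x by (auto simp: word_unfold_Inl)
  qed (use x in \<open>auto simp: word_unfold_Inr\<close>)
qed (auto simp: word_unfold_Inl)

lemma sets_vimage_word_unfold_prepend:
  assumes \<gamma>: "\<gamma> \<in> X \<rightarrow>\<^sub>M Lobj X"
    and B: "word_unfold \<gamma> -` B \<inter> space X \<in> sets X"
  shows "word_unfold \<gamma> -` prepend w ` B \<inter> space X \<in> sets X"
proof (induction w)
  case Nil
  then show ?case using B by simp
next
  case (Cons a w)
  have "\<gamma> \<in> space X \<rightarrow> (UNIV \<times> space X) <+> UNIV"
    using measurable_space[OF \<gamma>] by (auto simp: space_Lobj)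
  moreover have "prepend (a # w) ` B = Cons a ` prepend w ` B"
    by auto
  moreover have "{a} \<times> (word_unfold \<gamma> -` prepend w ` B \<inter> space X) \<in> sets (count_space UNIV \<Otimes>\<^sub>M X)"
    using Cons.IH by (intro pair_measureI) auto
  ultimately show ?case
    by (simp only: vimage_word_unfold_Cons measurable_Lobj_vimage_Inl[OF \<gamma>])
qed

lemma measurable_word_unfold:
  assumes \<gamma>: "\<gamma> \<in> X \<rightarrow>\<^sub>M Lobj X"
  shows "word_unfold \<gamma> \<in> X \<rightarrow>\<^sub>M Ainf"
proof (rule measurable_AinfI)
  have "word_unfold \<gamma> x = Eps \<longleftrightarrow> \<gamma> x = Inr ()" for x
    by (cases "\<gamma> x") (auto simp: word_unfold_Inl word_unfold_Inr)
  then have "word_unfold \<gamma> -` {Eps} \<inter> space X = \<gamma> -` {Inr ()} \<inter> space X"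
    by auto
  then have "word_unfold \<gamma> -` {Eps} \<inter> space X \<in> sets X"
    using measurable_Lobj_vimage_Inr[OF \<gamma>] by simp
  from sets_vimage_word_unfold_prepend[OF \<gamma> this]
  show "word_unfold \<gamma> -` {fin w} \<inter> space X \<in> sets X" for w
    by (simp add: fin_def)
  from sets_vimage_word_unfold_prepend[OF \<gamma>, of UNIV]
  show "word_unfold \<gamma> -` range (prepend w) \<inter> space X \<in> sets X" for w
    by simp
qed

lemma word_unfold_unique:
  assumes \<gamma>: "\<gamma> \<in> space X \<rightarrow> (UNIV \<times> space X) <+> UNIV"
    and \<psi>: "\<forall>x \<in> space X. pi_map (\<psi> x) = Lmap \<psi> (\<gamma> x)"
    and x: "x \<in> space X"
  shows "\<psi> x = word_unfold \<gamma> x"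
proof -
  have "\<exists>x\<in>space X. u = \<psi> x \<and> v = word_unfold \<gamma> x \<Longrightarrow> u = v" for u v
  proof (coinduction arbitrary: u v rule: word.coinduct)
    case (Eq_word u v)
    then obtain x where x: "x \<in> space X" and uv: "u = \<psi> x" "v = word_unfold \<gamma> x"
      by blast
    then have \<psi>x: "pi_map (\<psi> x) = Lmap \<psi> (\<gamma> x)"
      using \<psi> by blast
    show ?case
    proof (cases "\<gamma> x")
      case (Inl p)
      obtain a y where p: "p = (a, y)" by (cases p)
      have "y \<in> space X"
        using \<gamma> x Inl p by force
      then show ?thesis
        using uv \<psi>x Inl p by (auto simp: pi_map_eq_Lmap_Inl_iff word_unfold_Inl)
    next
      case Inr
      then show ?thesis
        using uv \<psi>x by (auto simp: pi_map_eq_Lmap_Inr_iff word_unfold_Inr)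
    qed
  qed
  then show ?thesis
    using x by blast
qed

theorem mainTheorem8:
  fixes X :: "'b measure" and \<gamma> :: "'b \<Rightarrow> 'a::finite \<times> 'b + unit"
  assumes "\<gamma> \<in> X \<rightarrow>\<^sub>M Lobj X"
  shows "pi_map \<in> (Ainf :: 'a word measure) \<rightarrow>\<^sub>M Lobj Ainf
    \<and> (\<exists>\<phi> \<in> X \<rightarrow>\<^sub>M Ainf. (\<forall>x \<in> space X. pi_map (\<phi> x) = Lmap \<phi> (\<gamma> x))
         \<and> (\<forall>\<psi> \<in> X \<rightarrow>\<^sub>M Ainf. (\<forall>x \<in> space X. pi_map (\<psi> x) = Lmap \<psi> (\<gamma> x))
               \<longrightarrow> (\<forall>x \<in> space X. \<psi> x = \<phi> x)))"
proof (intro conjI bexI[of _ "word_unfold \<gamma>"] ballI allI impI)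
  show "pi_map \<in> (Ainf :: 'a word measure) \<rightarrow>\<^sub>M Lobj Ainf"
    by (rule measurable_pi_map)
  show "word_unfold \<gamma> \<in> X \<rightarrow>\<^sub>M Ainf"
    by (rule measurable_word_unfold[OF assms])
  show "pi_map (word_unfold \<gamma> x) = Lmap (word_unfold \<gamma>) (\<gamma> x)" for x
    by (rule pi_map_word_unfold)
  have \<gamma>: "\<gamma> \<in> space X \<rightarrow> (UNIV \<times> space X) <+> UNIV"
    using measurable_space[OF assms] by (auto simp: space_Lobj)
  show "\<psi> x = word_unfold \<gamma> x"
    if "\<forall>x\<in>space X. pi_map (\<psi> x) = Lmap \<psi> (\<gamma> x)" and "x \<in> space X" for \<psi> x
    by (rule word_unfold_unique[OF \<gamma> that])
qed

end
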